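(* Let $t\ge 2$ be an integer. For every integer $n\ge 1$, $$ex(n,n,n,K_{2,t}) \le \frac{3}{2}\, n\Big(1+\sqrt{2(t-1)(n-1)+1}\Big).$$
   Context: $K_{2,t}$ denotes the complete bipartite graph with parts of sizes $2$ and $t$. For an integer $n\ge1$, $ex(n,n,n,K_{2,t})$ is the maximum number of edges in a tripartite graph with three vertex classes each of size $n$ (edges only between different classes) that contains no subgraph isomorphic to $K_{2,t}$. *)

theory Defs
  imports Complex_Main
begin

text \<open>Vertex set of the tripartite host: class i in {0,1,2}, index j < n.\<close>
definition tri_vertices :: "nat \<Rightarrow> (nat \<times> nat) set" where
  "tri_vertices n = {0..<3} \<times> {0..<n}"

definition tripartite_graph :: "nat \<Rightarrow> (nat \<times> nat) set set \<Rightarrow> bool" where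
  "tripartite_graph n E \<longleftrightarrow>
     (\<forall>e\<in>E. \<exists>u v. e = {u, v} \<and> u \<in> tri_vertices n \<and> v \<in> tri_vertices n \<and> fst u \<noteq> fst v)"

definition contains_K2t :: "nat \<Rightarrow> 'v set set \<Rightarrow> bool" where
  "contains_K2t t E \<longleftrightarrow>
     (\<exists>a b T. a \<noteq> b \<and> finite T \<and> card T = t \<and> a \<notin> T \<and> b \<notin> T \<and>
        (\<forall>x\<in>T. {a, x} \<in> E \<and> {b, x} \<in> E))"

definition ex_tri_K2t :: "nat \<Rightarrow> nat \<Rightarrow> nat" where
  "ex_tri_K2t n t = Max {card E | E. tripartite_graph n E \<and> \<not> contains_K2t t E}"

end

(*
  Let e = |E| and d(x) the degree of x, so that the degrees sum to 2e. The neighbours of x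
  lie in the two classes other than that of x, hence by Cauchy-Schwarz d(x)^2 <= 2 M(x), where
  M(x) counts the ordered pairs (a, b) of neighbours of x lying in a common class (a = b allowed).
  Summing M(x) over all x counts, for every such pair, the common neighbours of a and b: this is
  d(a) when a = b and at most t - 1 otherwise, as the graph is K_{2,t}-free. Hence the sum of the
  M(x) is at most 2e + 3n(n - 1)(t - 1), and Cauchy-Schwarz over the 3n vertices gives
  (2e)^2 <= 3n * sum d(x)^2 <= 6n (2e + 3n(n - 1)(t - 1)); solving this quadratic in e gives the bound.
*)
theory Submission
  imports Defs "HOL-Analysis.Convex"
begin

definition nbhd :: "'v set set \<Rightarrow> 'v \<Rightarrow> 'v set" where
  "nbhd E x = {y. {x, y} \<in> E}"

definition graph_on :: "'v set \<Rightarrow> 'v set set \<Rightarrow> bool" where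
  "graph_on V E \<longleftrightarrow> (\<forall>e\<in>E. \<exists>u v. e = {u, v} \<and> u \<in> V \<and> v \<in> V \<and> u \<noteq> v)"

lemma graph_onD:
  assumes "graph_on V E" and "{x, y} \<in> E"
  shows "x \<in> V" and "y \<in> V" and "x \<noteq> y"
  using assms by (auto simp: graph_on_def doubleton_eq_iff)

lemma nbhd_subset: "graph_on V E \<Longrightarrow> nbhd E x \<subseteq> V"
  by (auto simp: nbhd_def dest: graph_onD)

lemma finite_nbhd: "finite V \<Longrightarrow> graph_on V E \<Longrightarrow> finite (nbhd E x)"
  by (rule finite_subset[OF nbhd_subset])

lemma mem_nbhd_commute: "y \<in> nbhd E x \<longleftrightarrow> x \<in> nbhd E y"
  by (simp add: nbhd_def insert_commute)

lemma finite_edges: "finite V \<Longrightarrow> graph_on V E \<Longrightarrow> finite E"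
  by (rule finite_subset[of E "Pow V"]) (auto simp: graph_on_def)

lemma sum_card_nbhd_eq_twice_card_edges:
  assumes "finite V" and G: "graph_on V E"
  shows "(\<Sum>x\<in>V. card (nbhd E x)) = 2 * card E"
proof -
  define A where "A = {(x, y). {x, y} \<in> E}"
  have "A = Sigma V (nbhd E)"
    by (auto simp: A_def nbhd_def dest: graph_onD[OF G])
  then have "(\<Sum>x\<in>V. card (nbhd E x)) = card A"
    using assms by (simp add: finite_nbhd)
  also have "\<dots> = (\<Sum>e\<in>E. card {p\<in>A. {fst p, snd p} = e})"
    unfolding card_eq_sum
    by (rule sum.group[symmetric])
      (use assms \<open>A = Sigma V (nbhd E)\<close> in \<open>auto simp: A_def finite_edges finite_nbhd\<close>)
  also have "\<dots> = (\<Sum>e\<in>E. 2)"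
  proof (rule sum.cong[OF refl])
    fix e assume "e \<in> E"
    then obtain u v where "e = {u, v}" "u \<noteq> v"
      using G by (auto simp: graph_on_def)
    with \<open>e \<in> E\<close> have "{p\<in>A. {fst p, snd p} = e} = {(u, v), (v, u)}"
      by (auto simp: A_def doubleton_eq_iff insert_commute)
    with \<open>u \<noteq> v\<close> show "card {p\<in>A. {fst p, snd p} = e} = 2"
      by simp
  qed
  finally show ?thesis
    by simp
qed

lemma card_common_nbhd_less:
  assumes "\<not> contains_K2t t E" and loopless: "\<And>x. {x, x} \<notin> E" and "a \<noteq> b"
  shows "card (nbhd E a \<inter> nbhd E b) < t"
proof (rule ccontr)
  assume "\<not> ?thesis"
  then obtain T where T: "T \<subseteq> nbhd E a \<inter> nbhd E b" "card T = t" "finite T"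
    by (metis not_less obtain_subset_with_card_n)
  moreover have "a \<notin> T" and "b \<notin> T"
    using T loopless by (auto simp: nbhd_def)
  ultimately have "contains_K2t t E"
    unfolding contains_K2t_def using \<open>a \<noteq> b\<close>
    by (intro exI[of _ a] exI[of _ b] exI[of _ T]) (auto simp: nbhd_def)
  with assms(1) show False ..
qed

lemma sum_card_nbhd_pairs_eq_sum_card_common_nbhd:
  assumes "finite V" and G: "graph_on V E"
  shows "(\<Sum>x\<in>V. card {(a, b) \<in> nbhd E x \<times> nbhd E x. R a b}) =
         (\<Sum>a\<in>V. \<Sum>b\<in>{b\<in>V. R a b}. card (nbhd E a \<inter> nbhd E b))"
proof -
  define P where "P x = {(a, b) \<in> nbhd E x \<times> nbhd E x. R a b}" for x
  define Q where "Q a = (SIGMA b:{b\<in>V. R a b}. nbhd E a \<inter> nbhd E b)" for a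
  have fin: "finite (P x)" "finite (Q x)" for x
    using assms by (auto simp: P_def Q_def finite_nbhd intro: finite_subset[of _ "nbhd E x \<times> nbhd E x"])
  have "(\<lambda>(x, a, b). (a, b, x)) ` Sigma V P = Sigma V Q"
  proof (intro equalityI subsetI)
    fix y assume "y \<in> (\<lambda>(x, a, b). (a, b, x)) ` Sigma V P"
    then obtain x a b where "y = (a, b, x)" "x \<in> V" "a \<in> nbhd E x" "b \<in> nbhd E x" "R a b"
      by (auto simp: P_def)
    then show "y \<in> Sigma V Q"
      using nbhd_subset[OF G] by (auto simp: Q_def mem_nbhd_commute)
  next
    fix y assume "y \<in> Sigma V Q"
    then obtain a b x where "y = (a, b, x)" "a \<in> V" "R a b" "x \<in> nbhd E a" "x \<in> nbhd E b"
      by (auto simp: Q_def)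
    moreover have "x \<in> V"
      using nbhd_subset[OF G] \<open>x \<in> nbhd E a\<close> by blast
    ultimately show "y \<in> (\<lambda>(x, a, b). (a, b, x)) ` Sigma V P"
      by (auto simp: P_def mem_nbhd_commute intro!: image_eqI[of _ _ "(x, a, b)"])
  qed
  moreover have "inj_on (\<lambda>(x, a, b). (a, b, x)) (Sigma V P)"
    by (auto simp: inj_on_def)
  ultimately have "card (Sigma V P) = card (Sigma V Q)"
    by (metis card_image)
  moreover have "card (Q a) = (\<Sum>b\<in>{b\<in>V. R a b}. card (nbhd E a \<inter> nbhd E b))" for a
    using assms by (simp add: Q_def finite_nbhd)
  ultimately show ?thesis
    using assms fin by (simp add: P_def)
qed

lemma card_squared_le_card_monochromatic_pairs:
  fixes f :: "'a \<Rightarrow> 'c"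
  assumes "finite A" and "finite C" and "f ` A \<subseteq> C"
  shows "real (card A)^2 \<le> real (card C) * real (card {(a, b) \<in> A \<times> A. f a = f b})"
proof -
  define cls where "cls c = {a \<in> A. f a = c}" for c
  have fin: "finite (cls c)" for c
    using assms(1) by (simp add: cls_def)
  have "A = (\<Union>c\<in>C. cls c)"
    using assms(3) by (auto simp: cls_def)
  also have "card \<dots> = (\<Sum>c\<in>C. card (cls c))"
    by (rule card_UN_disjoint) (use assms(2) fin in \<open>auto simp: cls_def\<close>)
  finally have card_A: "card A = (\<Sum>c\<in>C. card (cls c))" .
  have "{(a, b) \<in> A \<times> A. f a = f b} = (\<Union>c\<in>C. cls c \<times> cls c)"
    using assms(3) by (auto simp: cls_def)
  also have "card \<dots> = (\<Sum>c\<in>C. card (cls c)^2)"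
    by (subst card_UN_disjoint) (use assms(2) fin in \<open>auto simp: cls_def power2_eq_square card_cartesian_product\<close>)
  finally have card_pairs: "card {(a, b) \<in> A \<times> A. f a = f b} = (\<Sum>c\<in>C. card (cls c)^2)" .
  show ?thesis
    using sum_squared_le_sum_of_squares[of "\<lambda>c. real (card (cls c))" C]
    unfolding card_A card_pairs by (simp add: mult.commute)
qed

lemma le_of_square_le_linear:
  fixes a c x :: real
  assumes "x^2 \<le> 2 * a * x + a^2 * c" and "0 \<le> a" and "0 \<le> c"
  shows "x \<le> a * (1 + sqrt (c + 1))"
proof -
  have "(x - a)^2 \<le> a^2 * (c + 1)"
    using assms(1) by (simp add: power2_diff algebra_simps)
  then have "x - a \<le> sqrt (a^2 * (c + 1))"
    by (rule real_le_rsqrt)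
  also have "\<dots> = a * sqrt (c + 1)"
    using assms(2) by (simp add: real_sqrt_mult)
  finally show ?thesis
    by (simp add: algebra_simps)
qed

lemma finite_tri_vertices [simp]: "finite (tri_vertices n)"
  by (simp add: tri_vertices_def)

lemma card_tri_vertices [simp]: "card (tri_vertices n) = 3 * n"
  by (simp add: tri_vertices_def card_cartesian_product)

lemma card_tri_vertices_same_class:
  assumes "a \<in> tri_vertices n"
  shows "card {b \<in> tri_vertices n. fst a = fst b \<and> b \<noteq> a} = n - 1"
proof -
  have "{b \<in> tri_vertices n. fst a = fst b \<and> b \<noteq> a} = {fst a} \<times> {0..<n} - {a}"
    using assms by (auto simp: tri_vertices_def)
  then show ?thesis
    using assms by (simp add: tri_vertices_def card_cartesian_product mem_Times_iff)
qed

lemma tripartite_graph_on: "tripartite_graph n E \<Longrightarrow> graph_on (tri_vertices n) E"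
  by (fastforce simp: tripartite_graph_def graph_on_def)

lemma tripartite_nbhd_classes:
  assumes "tripartite_graph n E" and "x \<in> tri_vertices n"
  shows "fst ` nbhd E x \<subseteq> {0..<3} - {fst x}"
proof
  fix c assume "c \<in> fst ` nbhd E x"
  then obtain y where "c = fst y" and "{x, y} \<in> E"
    by (auto simp: nbhd_def)
  with assms(1) obtain u v where "{x, y} = {u, v}" "u \<in> tri_vertices n" "v \<in> tri_vertices n" "fst u \<noteq> fst v"
    unfolding tripartite_graph_def by blast
  then show "c \<in> {0..<3} - {fst x}"
    using \<open>c = fst y\<close> by (auto simp: doubleton_eq_iff tri_vertices_def)
qed

lemma tripartite_degree_squared_le:
  assumes "tripartite_graph n E" and "x \<in> tri_vertices n"
  shows "real (card (nbhd E x))^2 \<le> 2 * real (card {(a, b) \<in> nbhd E x \<times> nbhd E x. fst a = fst b})"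
proof -
  have "card ({0..<3} - {fst x}) = 2"
    using assms(2) by (auto simp: tri_vertices_def)
  then show ?thesis
    using card_squared_le_card_monochromatic_pairs[OF
        finite_nbhd[OF finite_tri_vertices tripartite_graph_on[OF assms(1)]] _
        tripartite_nbhd_classes[OF assms]]
    by simp
qed

lemma tripartite_sum_monochromatic_pairs_le:
  assumes G: "tripartite_graph n E" and free: "\<not> contains_K2t t E"
  defines "V \<equiv> tri_vertices n"
  shows "(\<Sum>x\<in>V. card {(a, b) \<in> nbhd E x \<times> nbhd E x. fst a = fst b})
           \<le> (\<Sum>x\<in>V. card (nbhd E x)) + 3 * n * (n - 1) * (t - 1)"
proof -
  have GV: "graph_on V E"
    unfolding V_def by (rule tripartite_graph_on[OF G])
  have loopless: "{x, x} \<notin> E" for x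
    using graph_onD(3)[OF GV] by blast
  have "(\<Sum>x\<in>V. card {(a, b) \<in> nbhd E x \<times> nbhd E x. fst a = fst b})
          = (\<Sum>a\<in>V. \<Sum>b\<in>{b\<in>V. fst a = fst b}. card (nbhd E a \<inter> nbhd E b))"
    by (rule sum_card_nbhd_pairs_eq_sum_card_common_nbhd[OF _ GV]) (simp add: V_def)
  also have "\<dots> \<le> (\<Sum>a\<in>V. card (nbhd E a) + (n - 1) * (t - 1))"
  proof (rule sum_mono)
    fix a assume "a \<in> V"
    define S where "S = {b\<in>V. fst a = fst b \<and> b \<noteq> a}"
    have "{b\<in>V. fst a = fst b} = insert a S" and "a \<notin> S"
      using \<open>a \<in> V\<close> by (auto simp: S_def)
    moreover have "card S = n - 1"
      using \<open>a \<in> V\<close> by (simp add: S_def V_def card_tri_vertices_same_class)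
    moreover have "(\<Sum>b\<in>S. card (nbhd E a \<inter> nbhd E b)) \<le> card S * (t - 1)"
    proof -
      have "card (nbhd E a \<inter> nbhd E b) \<le> t - 1" if "b \<in> S" for b
        using card_common_nbhd_less[OF free loopless, of a b] that by (auto simp: S_def)
      then show ?thesis
        using sum_bounded_above[of S _ "t - 1"] by simp
    qed
    ultimately show "(\<Sum>b\<in>{b\<in>V. fst a = fst b}. card (nbhd E a \<inter> nbhd E b))
                       \<le> card (nbhd E a) + (n - 1) * (t - 1)"
      by (simp add: S_def V_def)
  qed
  also have "\<dots> = (\<Sum>x\<in>V. card (nbhd E x)) + 3 * n * (n - 1) * (t - 1)"
    by (simp add: V_def sum.distrib)
  finally show ?thesis .
qed

lemma tripartite_K2t_free_card_edges:
  assumes G: "tripartite_graph n E" and free: "\<not> contains_K2t t E"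
  shows "(2 * card E)^2 \<le> 6 * n * (2 * card E + 3 * n * (n - 1) * (t - 1))"
proof -
  define V where "V = tri_vertices n"
  define M where "M x = card {(a, b) \<in> nbhd E x \<times> nbhd E x. fst a = fst b}" for x
  have degree_sum: "(\<Sum>x\<in>V. card (nbhd E x)) = 2 * card E"
    unfolding V_def by (rule sum_card_nbhd_eq_twice_card_edges[OF _ tripartite_graph_on[OF G]]) simp
  have pairs: "(\<Sum>x\<in>V. M x) \<le> 2 * card E + 3 * n * (n - 1) * (t - 1)"
    using degree_sum tripartite_sum_monochromatic_pairs_le[OF G free] by (simp add: V_def M_def)
  have "real ((2 * card E)^2) = (\<Sum>x\<in>V. real (card (nbhd E x)))^2"
    by (simp flip: degree_sum)
  also have "\<dots> \<le> (\<Sum>x\<in>V. real (card (nbhd E x))^2) * real (3 * n)"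
    using sum_squared_le_sum_of_squares[of "\<lambda>x. real (card (nbhd E x))" V] by (simp add: V_def)
  also have "\<dots> \<le> (\<Sum>x\<in>V. 2 * real (M x)) * real (3 * n)"
    using tripartite_degree_squared_le[OF G] unfolding V_def M_def
    by (intro mult_right_mono sum_mono) auto
  also have "\<dots> = real (6 * n * (\<Sum>x\<in>V. M x))"
    by (simp add: sum_distrib_left sum_distrib_right mult_ac)
  also have "\<dots> \<le> real (6 * n * (2 * card E + 3 * n * (n - 1) * (t - 1)))"
    using pairs by (intro of_nat_mono mult_left_mono) simp_all
  finally show ?thesis
    by (simp only: of_nat_le_iff)
qed

lemma not_contains_K2t_empty: "t \<ge> 1 \<Longrightarrow> \<not> contains_K2t t {}"
  unfolding contains_K2t_def by (auto simp: card_gt_0_iff)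

(* For t = 0 even the empty graph contains K_{2,0}, and the Max in ex_tri_K2t would be taken
   over the empty set. *)
lemma ex_tri_K2t_attained:
  assumes "t \<ge> 1"
  obtains E where "tripartite_graph n E" and "\<not> contains_K2t t E" and "ex_tri_K2t n t = card E"
proof -
  define \<G> where "\<G> = {E. tripartite_graph n E \<and> \<not> contains_K2t t E}"
  have "\<G> \<subseteq> Pow (Pow (tri_vertices n))"
    by (auto simp: \<G>_def tripartite_graph_def)
  then have "finite \<G>"
    by (rule finite_subset) simp
  moreover have "{} \<in> \<G>"
    using not_contains_K2t_empty[OF assms] by (simp add: \<G>_def tripartite_graph_def)
  moreover have "{card E | E. tripartite_graph n E \<and> \<not> contains_K2t t E} = card ` \<G>"
    by (auto simp: \<G>_def)
  ultimately have "ex_tri_K2t n t \<in> card ` \<G>"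
    unfolding ex_tri_K2t_def by (simp, intro Max_in) auto
  then show ?thesis
    using that by (auto simp: \<G>_def)
qed

theorem theorem1:
  fixes n t :: nat
  assumes "t \<ge> 2" and "n \<ge> 1"
  shows "real (ex_tri_K2t n t) \<le>
           3 / 2 * real n * (1 + sqrt (2 * (real t - 1) * (real n - 1) + 1))"
proof -
  obtain E where G: "tripartite_graph n E" and free: "\<not> contains_K2t t E"
    and ex: "ex_tri_K2t n t = card E"
    using ex_tri_K2t_attained[of t n] assms(1) by auto
  define m where "m = real (card E)"
  have "1 \<le> t"
    using assms(1) by simp
  have "real ((2 * card E)^2) \<le> real (6 * n * (2 * card E + 3 * n * (n - 1) * (t - 1)))"
    using tripartite_K2t_free_card_edges[OF G free] by (simp only: of_nat_le_iff)
  then have "(2 * m)^2 \<le> 6 * real n * (2 * m + 3 * real n * (real n - 1) * (real t - 1))"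
    unfolding m_def
    by (simp only: of_nat_mult of_nat_add of_nat_power of_nat_numeral of_nat_1
        of_nat_diff[OF assms(2)] of_nat_diff[OF \<open>1 \<le> t\<close>])
  then have "m^2 \<le> 2 * (3 / 2 * real n) * m + (3 / 2 * real n)^2 * (2 * (real t - 1) * (real n - 1))"
    by (simp add: power2_eq_square field_simps)
  then have "m \<le> 3 / 2 * real n * (1 + sqrt (2 * (real t - 1) * (real n - 1) + 1))"
    by (rule le_of_square_le_linear) (use assms in auto)
  then show ?thesis
    by (simp add: ex m_def)
qed

end
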